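(* Let $D$ be the minimal Dress ring of $\mathbb{R}(X)$ and let $J$ be the ideal of $D$ generated by a family $(r_i)_{i\in\Lambda}$ of elements of $D$. Then $J^2$ is the ideal generated by $(r_i^2)_{i\in\Lambda}$.
   Context: $D$ denotes the minimal Dress ring of the field $\mathbb{R}(X)$, i.e. the subring of $\mathbb{R}(X)$ generated by $\mathbb{Z}$ and all elements $1/(1+h^2)$ with $h\in\mathbb{R}(X)$. *)

theory Defs
  imports "HOL-Computational_Algebra.Polynomial" "HOL-Computational_Algebra.Fraction_Field"
begin

type_synonym ratfun = "real poly fract"

inductive_set minimal_dress_ring :: "ratfun set" where
  one: "1 \<in> minimal_dress_ring"
| gen: "1 / (1 + h^2) \<in> minimal_dress_ring"
| add: "a \<in> minimal_dress_ring \<Longrightarrow> b \<in> minimal_dress_ring \<Longrightarrow> a + b \<in> minimal_dress_ring"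
| neg: "a \<in> minimal_dress_ring \<Longrightarrow> - a \<in> minimal_dress_ring"
| mult: "a \<in> minimal_dress_ring \<Longrightarrow> b \<in> minimal_dress_ring \<Longrightarrow> a * b \<in> minimal_dress_ring"

definition ideal_gen :: "'a::comm_ring_1 set \<Rightarrow> 'a set \<Rightarrow> 'a set" where
  "ideal_gen R S = {x. \<exists>F c. finite F \<and> F \<subseteq> S \<and> (\<forall>s\<in>F. c s \<in> R) \<and> x = (\<Sum>s\<in>F. c s * s)}"

definition ideal_prod :: "'a::comm_ring_1 set \<Rightarrow> 'a set \<Rightarrow> 'a set \<Rightarrow> 'a set" where
  "ideal_prod R I J = ideal_gen R {a * b | a b. a \<in> I \<and> b \<in> J}"

end

theory Submission imports Defs begin

text \<open>In a field where no \<open>1 + h\<^sup>2\<close> vanishes, \<open>a b = e (a\<^sup>2 + b\<^sup>2)\<close> with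
  \<open>e = h / (1 + h\<^sup>2)\<close> and \<open>h = a / b\<close>. In a Dress ring such \<open>e\<close> always lies in the ring, since
  \<open>h / (1 + h\<^sup>2) = 1 / (1 + g\<^sup>2) - 1 / 2\<close> for \<open>g = (h - 1) / (h + 1)\<close>. Hence every product of two
  generators of \<open>J\<close> lies in the ideal generated by their squares, and so
  \<open>J\<^sup>2\<close>, which is generated by these products, is generated by the squares alone.\<close>

locale comm_subring =
  fixes R :: "'a::comm_ring_1 set"
  assumes one_mem: "1 \<in> R"
    and add_mem: "a \<in> R \<Longrightarrow> b \<in> R \<Longrightarrow> a + b \<in> R"
    and uminus_mem: "a \<in> R \<Longrightarrow> - a \<in> R"
    and mult_mem: "a \<in> R \<Longrightarrow> b \<in> R \<Longrightarrow> a * b \<in> R"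
begin

lemma zero_mem: "0 \<in> R"
  using add_mem[OF one_mem uminus_mem[OF one_mem]] by simp

lemma diff_mem: "a \<in> R \<Longrightarrow> b \<in> R \<Longrightarrow> a - b \<in> R"
  using add_mem[OF _ uminus_mem] by (metis diff_conv_add_uminus)

lemma ideal_gen_zero: "0 \<in> ideal_gen R S"
  unfolding ideal_gen_def by (auto intro!: exI[of _ "{}"])

lemma ideal_gen_base: "s \<in> S \<Longrightarrow> s \<in> ideal_gen R S"
  unfolding ideal_gen_def
  by (auto intro!: exI[of _ "{s}"] exI[of _ "\<lambda>_. 1"] one_mem)

lemma ideal_gen_mult: "d \<in> R \<Longrightarrow> x \<in> ideal_gen R S \<Longrightarrow> d * x \<in> ideal_gen R S"
  unfolding ideal_gen_def
  by (fastforce simp: sum_distrib_left mult.assoc intro!: exI[of _ "\<lambda>s. d * _ s"] mult_mem)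

lemma ideal_gen_add:
  assumes "x \<in> ideal_gen R S" and "y \<in> ideal_gen R S"
  shows "x + y \<in> ideal_gen R S"
proof -
  obtain F c where F: "finite F" "F \<subseteq> S" "\<forall>s\<in>F. c s \<in> R" "x = (\<Sum>s\<in>F. c s * s)"
    using assms(1) unfolding ideal_gen_def by blast
  obtain G e where G: "finite G" "G \<subseteq> S" "\<forall>s\<in>G. e s \<in> R" "y = (\<Sum>s\<in>G. e s * s)"
    using assms(2) unfolding ideal_gen_def by blast
  define c' where "c' s = (if s \<in> F then c s else 0)" for s
  define e' where "e' s = (if s \<in> G then e s else 0)" for s
  have "x = (\<Sum>s\<in>F \<union> G. c' s * s)"
    unfolding F(4) by (rule sum.mono_neutral_cong_left) (use F G in \<open>auto simp: c'_def\<close>)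
  moreover have "y = (\<Sum>s\<in>F \<union> G. e' s * s)"
    unfolding G(4) by (rule sum.mono_neutral_cong_left) (use F G in \<open>auto simp: e'_def\<close>)
  ultimately have "x + y = (\<Sum>s\<in>F \<union> G. (c' s + e' s) * s)"
    by (simp add: sum.distrib[symmetric] distrib_right)
  moreover have "\<forall>s\<in>F \<union> G. c' s + e' s \<in> R"
    using F G zero_mem by (auto simp: c'_def e'_def intro: add_mem)
  ultimately show ?thesis
    unfolding ideal_gen_def
    by (intro CollectI exI[of _ "F \<union> G"] exI[of _ "\<lambda>s. c' s + e' s"]) (use F G in auto)
qed

lemma ideal_gen_sum:
  "finite F \<Longrightarrow> (\<And>s. s \<in> F \<Longrightarrow> f s \<in> ideal_gen R S) \<Longrightarrow> sum f F \<in> ideal_gen R S"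
  by (induction F rule: finite_induct) (auto simp: ideal_gen_zero ideal_gen_add)

lemma ideal_gen_subset: "T \<subseteq> ideal_gen R S \<Longrightarrow> ideal_gen R T \<subseteq> ideal_gen R S"
  unfolding ideal_gen_def[of R T]
  by (auto intro!: ideal_gen_sum ideal_gen_mult)

lemma ideal_gen_mult_closed:
  assumes x: "x \<in> ideal_gen R S" and y: "y \<in> ideal_gen R T"
  shows "x * y \<in> ideal_gen R {s * t | s t. s \<in> S \<and> t \<in> T}"
proof -
  let ?P = "ideal_gen R {s * t | s t. s \<in> S \<and> t \<in> T}"
  obtain F c where F: "finite F" "F \<subseteq> S" "\<forall>s\<in>F. c s \<in> R" "x = (\<Sum>s\<in>F. c s * s)"
    using x unfolding ideal_gen_def by blast
  obtain G e where G: "finite G" "G \<subseteq> T" "\<forall>t\<in>G. e t \<in> R" "y = (\<Sum>t\<in>G. e t * t)"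
    using y unfolding ideal_gen_def by blast
  have "x * y = (\<Sum>s\<in>F. \<Sum>t\<in>G. (c s * e t) * (s * t))"
    unfolding F(4) G(4) sum_product by (simp add: algebra_simps)
  also have "\<dots> \<in> ?P"
    by (intro ideal_gen_sum ideal_gen_mult[OF mult_mem] ideal_gen_base) (use F G in blast)+
  finally show ?thesis .
qed

lemma ideal_prod_ideal_gen:
  "ideal_prod R (ideal_gen R S) (ideal_gen R T) = ideal_gen R {s * t | s t. s \<in> S \<and> t \<in> T}"
  unfolding ideal_prod_def
proof (rule equalityI)
  show "ideal_gen R {x * y |x y. x \<in> ideal_gen R S \<and> y \<in> ideal_gen R T}
        \<subseteq> ideal_gen R {s * t |s t. s \<in> S \<and> t \<in> T}"
    by (rule ideal_gen_subset) (auto intro: ideal_gen_mult_closed)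
  show "ideal_gen R {s * t |s t. s \<in> S \<and> t \<in> T}
        \<subseteq> ideal_gen R {x * y |x y. x \<in> ideal_gen R S \<and> y \<in> ideal_gen R T}"
    by (rule ideal_gen_subset) (fastforce intro: ideal_gen_base)
qed

lemma ideal_prod_self_eq_ideal_gen_squares:
  assumes "\<And>a b. a \<in> S \<Longrightarrow> b \<in> S \<Longrightarrow> a * b \<in> ideal_gen R {a\<^sup>2, b\<^sup>2}"
  shows "ideal_prod R (ideal_gen R S) (ideal_gen R S) = ideal_gen R ((\<lambda>s. s\<^sup>2) ` S)"
  unfolding ideal_prod_ideal_gen
proof (rule equalityI)
  have "a * b \<in> ideal_gen R ((\<lambda>s. s\<^sup>2) ` S)" if "a \<in> S" "b \<in> S" for a b
    using assms[OF that] ideal_gen_subset[of "{a\<^sup>2, b\<^sup>2}" "(\<lambda>s. s\<^sup>2) ` S"] that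
    by (auto intro: ideal_gen_base)
  then show "ideal_gen R {s * t |s t. s \<in> S \<and> t \<in> S} \<subseteq> ideal_gen R ((\<lambda>s. s\<^sup>2) ` S)"
    by (intro ideal_gen_subset) blast
  show "ideal_gen R ((\<lambda>s. s\<^sup>2) ` S) \<subseteq> ideal_gen R {s * t |s t. s \<in> S \<and> t \<in> S}"
    by (rule ideal_gen_subset) (auto simp: power2_eq_square intro: ideal_gen_base)
qed

end

locale dress_subring = comm_subring R for R :: "'a::field set" +
  assumes one_plus_square_nonzero: "1 + h\<^sup>2 \<noteq> 0"
    and inverse_one_plus_square_mem: "1 / (1 + h\<^sup>2) \<in> R"
begin

lemma divide_one_plus_square_mem: "h / (1 + h\<^sup>2) \<in> R"
proof (cases "h = -1")
  case True
  have "h / (1 + h\<^sup>2) = - (1 / (1 + 1\<^sup>2))"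
    using True by simp
  then show ?thesis
    using uminus_mem[OF inverse_one_plus_square_mem[of 1]] by simp
next
  case False
  define g where "g = (h - 1) / (h + 1)"
  have "h + 1 \<noteq> 0"
    using False by (simp add: add_eq_0_iff2)
  then have "1 + g\<^sup>2 = 2 * (1 + h\<^sup>2) / (h + 1)\<^sup>2"
    unfolding g_def by (simp add: power_divide add_divide_eq_iff) (simp add: power2_eq_square algebra_simps)
  then have g: "1 / (1 + g\<^sup>2) = (h + 1)\<^sup>2 / (2 * (1 + h\<^sup>2))"
    by simp
  have two: "(2::'a) \<noteq> 0"
    using one_plus_square_nonzero[of 1] by simp
  have "1 / 2 = (1 + h\<^sup>2) / (2 * (1 + h\<^sup>2))"
    using nonzero_mult_divide_mult_cancel_right[OF one_plus_square_nonzero[of h], of 1 2]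
    by (simp only: mult_1_left)
  then have "1 / (1 + g\<^sup>2) - 1 / 2 = ((h + 1)\<^sup>2 - (1 + h\<^sup>2)) / (2 * (1 + h\<^sup>2))"
    unfolding g by (simp only: diff_divide_distrib)
  also have "\<dots> = (2 * h) / (2 * (1 + h\<^sup>2))"
    by (simp add: power2_eq_square algebra_simps)
  also have "\<dots> = h / (1 + h\<^sup>2)"
    using two by (rule nonzero_mult_divide_mult_cancel_left)
  finally have "h / (1 + h\<^sup>2) = 1 / (1 + g\<^sup>2) - 1 / (1 + 1\<^sup>2)"
    by simp
  then show ?thesis
    using diff_mem[OF inverse_one_plus_square_mem[of g] inverse_one_plus_square_mem[of 1]] by simp
qed

lemma mult_mem_ideal_gen_squares: "a * b \<in> ideal_gen R {a\<^sup>2, b\<^sup>2}"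
proof (cases "b = 0")
  case True
  then show ?thesis using ideal_gen_zero by simp
next
  case False
  define h where "h = a / b"
  define e where "e = h / (1 + h\<^sup>2)"
  have a: "a = h * b"
    unfolding h_def using False by simp
  have "e * a\<^sup>2 + e * b\<^sup>2 = e * (1 + h\<^sup>2) * b\<^sup>2"
    unfolding a by (simp add: algebra_simps power2_eq_square)
  also have "\<dots> = a * b"
    unfolding e_def a using one_plus_square_nonzero[of h] by (simp add: power2_eq_square)
  finally have "a * b = e * a\<^sup>2 + e * b\<^sup>2" ..
  also have "\<dots> \<in> ideal_gen R {a\<^sup>2, b\<^sup>2}"
    unfolding e_def by (intro ideal_gen_add ideal_gen_mult divide_one_plus_square_mem ideal_gen_base) auto
  finally show ?thesis .
qed

end

lemma real_poly_sum_squares_eq_0_imp: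
  fixes p q :: "real poly"
  assumes "p\<^sup>2 + q\<^sup>2 = 0"
  shows "p = 0"
proof -
  have "poly p x = 0" for x
  proof -
    have "(poly p x)\<^sup>2 + (poly q x)\<^sup>2 = 0"
      using arg_cong[OF assms, of "\<lambda>f. poly f x"] by simp
    then show ?thesis by (simp add: add_nonneg_eq_0_iff)
  qed
  then show ?thesis using poly_all_0_iff_0 by blast
qed

lemma ratfun_one_plus_square_nonzero: "1 + (h::ratfun)\<^sup>2 \<noteq> 0"
proof (cases h)
  case (Fract a b)
  have "1 + h\<^sup>2 = Fract (b * b + a * a) (b * b)"
    using Fract by (simp add: power2_eq_square One_fract_def algebra_simps)
  moreover have "b * b + a * a \<noteq> 0"
    using real_poly_sum_squares_eq_0_imp[of b a] Fract by (auto simp: power2_eq_square)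
  ultimately show ?thesis
    using Fract by (simp add: Zero_fract_def eq_fract)
qed

interpretation minimal_dress_ring: dress_subring minimal_dress_ring
  by unfold_locales
    (auto intro: minimal_dress_ring.intros simp: ratfun_one_plus_square_nonzero)

theorem proposition2p2:
  fixes r :: "'i \<Rightarrow> ratfun" and \<Lambda> :: "'i set"
  assumes "\<forall>i\<in>\<Lambda>. r i \<in> minimal_dress_ring"
  shows "ideal_prod minimal_dress_ring (ideal_gen minimal_dress_ring (r ` \<Lambda>))
                                        (ideal_gen minimal_dress_ring (r ` \<Lambda>))
         = ideal_gen minimal_dress_ring ((\<lambda>i. (r i)^2) ` \<Lambda>)"
  using minimal_dress_ring.ideal_prod_self_eq_ideal_gen_squares[of "r ` \<Lambda>"]
  by (simp add: minimal_dress_ring.mult_mem_ideal_gen_squares image_image)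

end
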